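(* Let $K$ be a compact Hausdorff space, $B$ the open unit ball of $C(K)$, $f_0\in B$, and $T(f)=\frac{f-f_0}{1-\overline{f_0}f}$ for $f\in B$. Let $H(B)$ denote either $A_u(B)$ or $H^\infty(B)$. Then $\psi\circ T\in H(B)$ for every $\psi\in H(B)$, so $\hat T:M_{H(B)}\to M_{H(B)}$, $\hat T(\tau)(\psi)=\tau(\psi\circ T)$, is well defined, and $\hat T$ maps $\mathcal M_{f_0}(B)$ onto $\mathcal M_0(B)$.
   Context: $A_u(B)$ is the uniform algebra of bounded holomorphic functions on $B$ that are uniformly continuous on $B$; $H^\infty(B)$ is the uniform algebra of all bounded holomorphic functions on $B$. $M_{H(B)}$ is the spectrum (nonzero multiplicative linear functionals) of $H(B)$. For $g_0\in B$, $\mathcal M_{g_0}(B)=\{\tau\in M_{H(B)}:\ \tau(g)=g(g_0)\ \text{for all } g\in A_u(B)\}$. *)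

theory Defs
  imports "HOL-Analysis.Analysis"
begin

text \<open>C(K) is rendered as the Banach space of (bounded) continuous complex functions
  on the type 'a (for compact 'a every continuous function is bounded) with the sup norm.\<close>

type_synonym 'a CK = "'a \<Rightarrow>\<^sub>C complex"

text \<open>Complex scalar multiplication on C(K) (pointwise); the library only provides real scaling.\<close>
definition scaleC_CK :: "complex \<Rightarrow> 'a::topological_space CK \<Rightarrow> 'a CK" where
  "scaleC_CK c f = Bcontfun (\<lambda>x. c * apply_bcontfun f x)"

definition unitB :: "'a::topological_space CK set" where
  "unitB = ball 0 1"

definition holo_on :: "'a::topological_space CK set \<Rightarrow> ('a CK \<Rightarrow> complex) \<Rightarrow> bool" where
  "holo_on S \<psi> \<longleftrightarrow> (\<forall>g\<in>S. \<exists>L. (\<psi> has_derivative L) (at g) \<and>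
      (\<forall>c v. L (scaleC_CK c v) = c * L v))"

text \<open>Functions are considered as elements of the algebras only through their values on B;
  to make this extensional we require them to vanish outside B.\<close>
definition Hinf :: "'a::topological_space CK set \<Rightarrow> ('a CK \<Rightarrow> complex) set" where
  "Hinf S = {\<psi>. holo_on S \<psi> \<and> (\<exists>M. \<forall>g\<in>S. norm (\<psi> g) \<le> M) \<and> (\<forall>g. g \<notin> S \<longrightarrow> \<psi> g = 0)}"

definition Au :: "'a::topological_space CK set \<Rightarrow> ('a CK \<Rightarrow> complex) set" where
  "Au S = {\<psi>. \<psi> \<in> Hinf S \<and> uniformly_continuous_on S \<psi>}"

text \<open>Spectrum of a function algebra A: nonzero multiplicative complex-linear functionals on A
  (extended by 0 outside A, so that functionals are identified with their restriction to A).\<close>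
definition spectrum_alg :: "('b \<Rightarrow> complex) set \<Rightarrow> (('b \<Rightarrow> complex) \<Rightarrow> complex) set" where
  "spectrum_alg A = {\<tau>.
      (\<forall>\<psi>\<in>A. \<forall>\<phi>\<in>A. \<tau> (\<lambda>x. \<psi> x + \<phi> x) = \<tau> \<psi> + \<tau> \<phi>) \<and>
      (\<forall>\<psi>\<in>A. \<forall>c. \<tau> (\<lambda>x. c * \<psi> x) = c * \<tau> \<psi>) \<and>
      (\<forall>\<psi>\<in>A. \<forall>\<phi>\<in>A. \<tau> (\<lambda>x. \<psi> x * \<phi> x) = \<tau> \<psi> * \<tau> \<phi>) \<and>
      (\<exists>\<psi>\<in>A. \<tau> \<psi> \<noteq> 0) \<and>
      (\<forall>\<psi>. \<psi> \<notin> A \<longrightarrow> \<tau> \<psi> = 0)}"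

definition fiber :: "('a::topological_space CK \<Rightarrow> complex) set \<Rightarrow> 'a CK \<Rightarrow> (('a CK \<Rightarrow> complex) \<Rightarrow> complex) set" where
  "fiber H g0 = {\<tau> \<in> spectrum_alg H. \<forall>g\<in>Au unitB. \<tau> g = g g0}"

definition Tmap :: "'a::topological_space CK \<Rightarrow> 'a CK \<Rightarrow> 'a CK" where
  "Tmap f0 f = Bcontfun (\<lambda>x. (apply_bcontfun f x - apply_bcontfun f0 x) /
                                  (1 - cnj (apply_bcontfun f0 x) * apply_bcontfun f x))"

definition compT :: "'a::topological_space CK \<Rightarrow> ('a CK \<Rightarrow> complex) \<Rightarrow> ('a CK \<Rightarrow> complex)" where
  "compT f0 \<psi> = (\<lambda>g. if g \<in> unitB then \<psi> (Tmap f0 g) else 0)"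

definition hatT :: "('a::topological_space CK \<Rightarrow> complex) set \<Rightarrow> 'a CK \<Rightarrow>
    (('a CK \<Rightarrow> complex) \<Rightarrow> complex) \<Rightarrow> (('a CK \<Rightarrow> complex) \<Rightarrow> complex)" where
  "hatT H f0 \<tau> = (\<lambda>\<psi>. if \<psi> \<in> H then \<tau> (compT f0 \<psi>) else 0)"

end

theory Submission
  imports Defs
begin

(* The proof works pointwise: T acts on each value f(x) by the scalar Moebius map
   mob w z = (z - w)/(1 - conj w * z) of the disc, with w = f0(x).  All estimates are
   first proved for mob with constants depending only on a bound a >= |w|, a < 1, and then
   lifted to C(K) by taking suprema.  They show that T maps B into B, is Lipschitz on B,
   and is Frechet differentiable with derivative "multiply by mob_deriv(f0, g)", which is
   complex-linear; moreover T with parameter -f0 inverts T.  Hence psi o T stays bounded,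
   holomorphic and (for A_u) uniformly continuous.  Both A_u(B) and H^inf(B) are then
   "admissible" algebras of functions on B: closed under the algebra operations and under
   composition with T, containing A_u(B) and the unit of B.  For such an algebra hatT is a
   map of the spectrum that sends the fiber over g0 into the fiber over T(g0); since
   T(f0) = 0, T_{-f0}(0) = f0 and hatT_{-f0} inverts hatT_{f0}, the theorem follows. *)

definition mob :: "complex \<Rightarrow> complex \<Rightarrow> complex" where
  "mob w z = (z - w) / (1 - cnj w * z)"

lemma mob_denom_ge:
  assumes "norm w \<le> a" "norm z \<le> 1"
  shows "1 - a \<le> norm (1 - cnj w * z)"
proof -
  have "norm (cnj w * z) \<le> a"
    using assms by (simp add: norm_mult) (metis mult_left_le norm_ge_zero order_trans)
  moreover have "1 - norm (cnj w * z) \<le> norm (1 - cnj w * z)"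
    using norm_triangle_ineq2[of 1 "cnj w * z"] by simp
  ultimately show ?thesis by linarith
qed

lemma mob_denom_nonzero:
  assumes "norm w < 1" "norm z \<le> 1"
  shows "1 - cnj w * z \<noteq> 0"
  using mob_denom_ge[OF order_refl assms(2), of w] assms(1) by auto

lemma norm_one_minus_sq_le:
  assumes "norm w \<le> 1"
  shows "norm (1 - w * cnj w) \<le> 1"
proof -
  have eq: "1 - w * cnj w = complex_of_real (1 - (norm w)\<^sup>2)"
    by (simp only: of_real_diff of_real_1 complex_norm_square)
  have "\<bar>1 - (norm w)\<^sup>2\<bar> \<le> 1" using assms by (simp add: power_le_one)
  then show ?thesis unfolding eq norm_of_real .
qed

lemma mob_diff:
  assumes "1 - cnj w * z1 \<noteq> 0" "1 - cnj w * z2 \<noteq> 0"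
  shows "mob w z1 - mob w z2 = (z1 - z2) * (1 - w * cnj w) / ((1 - cnj w * z1) * (1 - cnj w * z2))"
  using assms unfolding mob_def by (simp add: field_simps)

lemma mob_lipschitz:
  assumes "norm w \<le> a" "a < 1" "norm z1 \<le> 1" "norm z2 \<le> 1"
  shows "norm (mob w z1 - mob w z2) \<le> norm (z1 - z2) / (1 - a)\<^sup>2"
proof -
  have w: "norm w < 1" using assms by simp
  have "(1 - a)\<^sup>2 \<le> norm (1 - cnj w * z1) * norm (1 - cnj w * z2)"
    unfolding power2_eq_square using assms mob_denom_ge[OF assms(1)]
    by (intro mult_mono) auto
  moreover have "norm (z1 - z2) * norm (1 - w * cnj w) \<le> norm (z1 - z2)"
    using norm_one_minus_sq_le[of w] w by (simp add: mult_left_le)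
  ultimately show ?thesis
    using assms mob_diff[OF mob_denom_nonzero[OF w assms(3)] mob_denom_nonzero[OF w assms(4)]]
    by (simp add: norm_mult norm_divide frac_le)
qed

definition mob_deriv :: "complex \<Rightarrow> complex \<Rightarrow> complex" where
  "mob_deriv w z = (1 - w * cnj w) / (1 - cnj w * z)\<^sup>2"

lemma mob_deriv_bound:
  assumes "norm w \<le> a" "a < 1" "norm z \<le> 1"
  shows "norm (mob_deriv w z) \<le> 1 / (1 - a)\<^sup>2"
proof -
  have "(1 - a)\<^sup>2 \<le> (norm (1 - cnj w * z))\<^sup>2"
    using mob_denom_ge[OF assms(1,3)] assms(2) by (intro power_mono) auto
  then show ?thesis
    unfolding mob_deriv_def norm_divide norm_power
    using norm_one_minus_sq_le[of w] assms by (intro frac_le) auto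
qed

lemma mob_remainder_eq:
  assumes "1 - cnj w * z \<noteq> 0" "1 - cnj w * (z + k) \<noteq> 0"
  shows "mob w (z + k) - mob w z - mob_deriv w z * k
       = cnj w * k\<^sup>2 * (1 - w * cnj w) / ((1 - cnj w * (z + k)) * (1 - cnj w * z)\<^sup>2)"
proof -
  define D D' K where "D = 1 - cnj w * z" and "D' = 1 - cnj w * (z + k)" and "K = 1 - w * cnj w"
  have "D \<noteq> 0" "D' \<noteq> 0" using assms by (simp_all add: D_def D'_def)
  then have "k * K / (D' * D) - K / D\<^sup>2 * k = k * K * (D - D') / (D' * D\<^sup>2)"
    by (simp add: field_simps power2_eq_square)
  moreover have "D - D' = cnj w * k" by (simp add: D_def D'_def algebra_simps)
  moreover have "mob w (z + k) - mob w z = k * K / (D' * D)"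
    using mob_diff[OF assms(2,1)] by (simp add: D_def D'_def K_def)
  ultimately show ?thesis
    by (simp add: mob_deriv_def D_def D'_def K_def power2_eq_square mult_ac)
qed

lemma mob_remainder:
  assumes "norm w \<le> a" "a < 1" "norm z \<le> 1" "norm (z + k) \<le> 1"
  shows "norm (mob w (z + k) - mob w z - mob_deriv w z * k) \<le> (norm k)\<^sup>2 / (1 - a)^3"
proof -
  have w: "norm w < 1" using assms by simp
  have "norm (cnj w) * (norm k)\<^sup>2 * norm (1 - w * cnj w) \<le> 1 * (norm k)\<^sup>2 * 1"
    using w norm_one_minus_sq_le[of w] by (intro mult_mono) auto
  moreover have "(1 - a)^3 \<le> norm (1 - cnj w * (z + k)) * (norm (1 - cnj w * z))\<^sup>2"
  proof -
    have "(1 - a)^3 = (1 - a) * (1 - a)\<^sup>2" by (simp add: power3_eq_cube power2_eq_square)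
    moreover have "(1 - a)\<^sup>2 \<le> (norm (1 - cnj w * z))\<^sup>2"
      using mob_denom_ge[OF assms(1,3)] assms(2) by (intro power_mono) auto
    ultimately show ?thesis
      using mob_denom_ge[OF assms(1,4)] assms(2) by (simp add: mult_mono)
  qed
  ultimately show ?thesis
    using assms unfolding mob_remainder_eq[OF mob_denom_nonzero[OF w assms(3)] mob_denom_nonzero[OF w assms(4)]]
    by (simp add: norm_mult norm_divide norm_power frac_le)
qed

lemma mob_norm_sq:
  assumes "1 - cnj w * z \<noteq> 0"
  shows "(norm (mob w z))\<^sup>2 = 1 - (1 - (norm w)\<^sup>2) * (1 - (norm z)\<^sup>2) / (norm (1 - cnj w * z))\<^sup>2"
proof -
  have "(z - w) * cnj (z - w) + (1 - w * cnj w) * (1 - z * cnj z)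
      = (1 - cnj w * z) * cnj (1 - cnj w * z)"
    by (simp add: algebra_simps)
  then have "complex_of_real ((norm (z - w))\<^sup>2 + (1 - (norm w)\<^sup>2) * (1 - (norm z)\<^sup>2))
      = complex_of_real ((norm (1 - cnj w * z))\<^sup>2)"
    by (simp only: of_real_add of_real_mult of_real_diff of_real_1 complex_norm_square)
  then have "(norm (z - w))\<^sup>2 + (1 - (norm w)\<^sup>2) * (1 - (norm z)\<^sup>2) = (norm (1 - cnj w * z))\<^sup>2"
    using of_real_eq_iff by blast
  then show ?thesis
    using assms by (simp add: mob_def norm_divide power_divide field_simps)
qed

lemma mob_norm_bound:
  assumes "norm w \<le> a" "a < 1" "norm z \<le> b" "b < 1"
  shows "(norm (mob w z))\<^sup>2 \<le> 1 - (1 - a\<^sup>2) * (1 - b\<^sup>2) / 4"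
proof -
  have z: "norm z \<le> 1" using assms by simp
  have nz: "1 - cnj w * z \<noteq> 0" using assms mob_denom_nonzero[OF _ z] by simp
  have "norm (cnj w * z) \<le> 1"
    using assms z by (simp add: norm_mult mult_le_one)
  then have "norm (1 - cnj w * z) \<le> 2"
    using norm_triangle_ineq4[of 1 "cnj w * z"] by simp
  then have "(norm (1 - cnj w * z))\<^sup>2 \<le> 2\<^sup>2" by (intro power_mono) auto
  moreover have "(1 - a\<^sup>2) * (1 - b\<^sup>2) \<le> (1 - (norm w)\<^sup>2) * (1 - (norm z)\<^sup>2)"
    using assms order_trans[OF norm_ge_zero assms(3)]
    by (intro mult_mono) (auto intro: power_mono simp: power_le_one)
  moreover have "0 \<le> (1 - a\<^sup>2) * (1 - b\<^sup>2)"
    using assms order_trans[OF norm_ge_zero assms(1)] order_trans[OF norm_ge_zero assms(3)]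
    by (intro mult_nonneg_nonneg) (simp_all add: power_le_one)
  ultimately have "(1 - a\<^sup>2) * (1 - b\<^sup>2) / 4
      \<le> (1 - (norm w)\<^sup>2) * (1 - (norm z)\<^sup>2) / (norm (1 - cnj w * z))\<^sup>2"
    using nz by (intro frac_le) auto
  then show ?thesis unfolding mob_norm_sq[OF nz] by simp
qed

lemma mob_self: "mob w w = 0"
  by (simp add: mob_def)

lemma mob_zero: "mob (- w) 0 = w"
  by (simp add: mob_def)

lemma mob_inverse:
  assumes "norm w < 1" "1 - cnj w * z \<noteq> 0"
  shows "mob (- w) (mob w z) = z"
proof -
  define D K where "D = 1 - cnj w * z" and "K = 1 - w * cnj w"
  have "norm (w * cnj w) < 1"
    using assms(1) by (simp add: norm_mult abs_square_less_1 flip: power2_eq_square)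
  then have K: "K \<noteq> 0" by (auto simp: K_def)
  have D: "D \<noteq> 0" using assms(2) by (simp add: D_def)
  have "mob w z + w = z * K / D" and "1 + cnj w * mob w z = K / D"
    using D by (simp_all add: mob_def D_def K_def field_simps)
  then have "mob (- w) (mob w z) = (z * K / D) / (K / D)"
    by (simp add: mob_def)
  also have "\<dots> = z" using K D by simp
  finally show ?thesis .
qed

lemma apply_Bcontfun:
  fixes u :: "'a::topological_space \<Rightarrow> complex"
  assumes "continuous_on UNIV u" "\<And>x. norm (u x) \<le> M"
  shows "apply_bcontfun (Bcontfun u) = u"
  using Bcontfun_inverse[OF bcontfun_normI[OF assms]] .

lemma unitB_iff: "f \<in> unitB \<longleftrightarrow> norm f < 1"
  by (simp add: unitB_def dist_norm)

lemma open_unitB: "open unitB"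
  by (simp add: unitB_def)

lemma Tmap_apply:
  fixes f0 f :: "'a::topological_space CK"
  assumes "norm f0 < 1" "norm f \<le> 1"
  shows "apply_bcontfun (Tmap f0 f) x = mob (apply_bcontfun f0 x) (apply_bcontfun f x)"
proof -
  have w: "norm (apply_bcontfun f0 y) \<le> norm f0" and z: "norm (apply_bcontfun f y) \<le> 1" for y
    using norm_bounded[of f0 y] norm_bounded[of f y] assms by simp_all
  have "norm (mob (apply_bcontfun f0 y) (apply_bcontfun f y)) \<le> 2 / (1 - norm f0)" for y
  proof -
    have "norm (apply_bcontfun f y - apply_bcontfun f0 y) \<le> 2"
      using norm_triangle_ineq4[of "apply_bcontfun f y" "apply_bcontfun f0 y"] w[of y] z[of y] assms(1)
      by linarith
    then show ?thesis
      using mob_denom_ge[OF w z] assms(1) by (simp add: mob_def norm_divide frac_le)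
  qed
  moreover have "continuous_on UNIV (\<lambda>y. mob (apply_bcontfun f0 y) (apply_bcontfun f y))"
    unfolding mob_def using mob_denom_nonzero w z assms(1)
    by (intro continuous_intros) (auto intro: le_less_trans)
  ultimately show ?thesis
    unfolding Tmap_def mob_def[symmetric] by (subst apply_Bcontfun) auto
qed

lemma Tmap_lipschitz:
  fixes f0 f g :: "'a::topological_space CK"
  assumes "norm f0 < 1" "norm f \<le> 1" "norm g \<le> 1"
  shows "norm (Tmap f0 f - Tmap f0 g) \<le> norm (f - g) / (1 - norm f0)\<^sup>2"
proof (rule norm_bound)
  fix x
  have pointwise: "norm (apply_bcontfun f x - apply_bcontfun g x) \<le> norm (f - g)"
    using norm_bounded[of "f - g" x] by simp
  have "norm (apply_bcontfun (Tmap f0 f - Tmap f0 g) x)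
      \<le> norm (apply_bcontfun f x - apply_bcontfun g x) / (1 - norm f0)\<^sup>2"
    unfolding minus_bcontfun.rep_eq Tmap_apply[OF assms(1,2)] Tmap_apply[OF assms(1,3)]
    using assms norm_bounded by (intro mob_lipschitz) (auto intro: order_trans)
  also have "\<dots> \<le> norm (f - g) / (1 - norm f0)\<^sup>2"
    using pointwise by (simp add: divide_right_mono)
  finally show "norm (apply_bcontfun (Tmap f0 f - Tmap f0 g) x) \<le> norm (f - g) / (1 - norm f0)\<^sup>2" .
qed

(* T maps the open unit ball into itself (the bound is uniform in x, so the supremum stays below 1). *)
lemma Tmap_norm_less:
  fixes f0 f :: "'a::topological_space CK"
  assumes "norm f0 < 1" "norm f < 1"
  shows "norm (Tmap f0 f) < 1"
proof -
  define c where "c = (1 - (norm f0)\<^sup>2) * (1 - (norm f)\<^sup>2) / 4"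
  have "0 < c" using assms by (simp add: c_def abs_square_less_1)
  have "norm (apply_bcontfun (Tmap f0 f) x) \<le> sqrt (1 - c)" for x
  proof -
    have "(norm (apply_bcontfun (Tmap f0 f) x))\<^sup>2 \<le> 1 - c"
      unfolding Tmap_apply[OF assms(1) less_imp_le[OF assms(2)]] c_def
      using assms by (intro mob_norm_bound) (auto simp: norm_bounded)
    then show ?thesis by (simp add: real_le_rsqrt)
  qed
  then have "norm (Tmap f0 f) \<le> sqrt (1 - c)" by (rule norm_bound)
  also have "\<dots> < 1" using \<open>0 < c\<close> by simp
  finally show ?thesis .
qed

lemma Tmap_unitB: "f0 \<in> unitB \<Longrightarrow> f \<in> unitB \<Longrightarrow> Tmap f0 f \<in> unitB"
  by (simp add: unitB_iff Tmap_norm_less)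

lemma Tmap_self: "norm f0 < 1 \<Longrightarrow> Tmap f0 f0 = 0"
  by (rule bcontfun_eqI) (simp add: Tmap_apply mob_self)

lemma Tmap_zero: "norm f0 < 1 \<Longrightarrow> Tmap (- f0) 0 = f0"
  by (rule bcontfun_eqI) (simp add: Tmap_apply mob_zero)

lemma Tmap_inverse:
  fixes f0 g :: "'a::topological_space CK"
  assumes "norm f0 < 1" "norm g < 1"
  shows "Tmap f0 (Tmap (- f0) g) = g"
proof (rule bcontfun_eqI)
  fix x
  have w: "norm (- apply_bcontfun f0 x) < 1" and z: "norm (apply_bcontfun g x) \<le> 1"
    using norm_bounded[of f0 x] norm_bounded[of g x] assms by simp_all
  have "norm (Tmap (- f0) g) \<le> 1" using Tmap_norm_less[of "- f0" g] assms by simp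
  then have "apply_bcontfun (Tmap f0 (Tmap (- f0) g)) x
      = mob (- (- apply_bcontfun f0 x)) (mob (- apply_bcontfun f0 x) (apply_bcontfun g x))"
    using assms by (simp add: Tmap_apply)
  also have "\<dots> = apply_bcontfun g x"
    by (rule mob_inverse[OF w mob_denom_nonzero[OF w z]])
  finally show "apply_bcontfun (Tmap f0 (Tmap (- f0) g)) x = apply_bcontfun g x" .
qed

lemma has_derivative_quadratic_remainder:
  fixes f :: "'a::real_normed_vector \<Rightarrow> 'b::real_normed_vector"
  assumes "bounded_linear L"
    and "\<forall>\<^sub>F y in at x. norm (f y - f x - L (y - x)) \<le> C * (norm (y - x))\<^sup>2"
  shows "(f has_derivative L) (at x)"
proof -
  have "\<forall>\<^sub>F y in at x. norm (norm (f y - f x - L (y - x)) / norm (y - x)) \<le> C * norm (y - x)"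
    using assms(2)
  proof eventually_elim
    case (elim y)
    then show ?case
      by (cases "y = x") (simp_all add: divide_le_eq power2_eq_square mult.assoc)
  qed
  moreover have "((\<lambda>y. C * norm (y - x)) \<longlongrightarrow> 0) (at x)"
    by (auto intro!: tendsto_eq_intros)
  ultimately have "((\<lambda>y. norm (f y - f x - L (y - x)) / norm (y - x)) \<longlongrightarrow> 0) (at x)"
    by (rule Lim_null_comparison)
  then show ?thesis
    unfolding has_derivative_iff_norm using assms(1) by blast
qed

definition pmult :: "'a::topological_space CK \<Rightarrow> 'a CK \<Rightarrow> 'a CK" where
  "pmult p h = Bcontfun (\<lambda>x. apply_bcontfun p x * apply_bcontfun h x)"

lemma pmult_apply: "apply_bcontfun (pmult p h) x = apply_bcontfun p x * apply_bcontfun h x"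
proof -
  have "norm (apply_bcontfun p y * apply_bcontfun h y) \<le> norm p * norm h" for y
    unfolding norm_mult by (intro mult_mono norm_bounded) auto
  then show ?thesis
    unfolding pmult_def by (subst apply_Bcontfun) (auto intro: continuous_intros)
qed

lemma pmult_bounded_linear: "bounded_linear (pmult p)"
proof (rule bounded_linear_intro[where K = "norm p"])
  show "pmult p (h + k) = pmult p h + pmult p k" for h k
    by (rule bcontfun_eqI) (simp add: pmult_apply algebra_simps)
  show "pmult p (r *\<^sub>R h) = r *\<^sub>R pmult p h" for r h
    by (rule bcontfun_eqI) (simp add: pmult_apply scaleR_conv_of_real algebra_simps)
  show "norm (pmult p h) \<le> norm h * norm p" for h
    by (rule norm_bound)
       (simp add: pmult_apply norm_mult mult.commute mult_mono norm_bounded)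
qed

lemma scaleC_CK_apply: "apply_bcontfun (scaleC_CK c v) x = c * apply_bcontfun v x"
proof -
  have "norm (c * apply_bcontfun v y) \<le> norm c * norm v" for y
    unfolding norm_mult by (intro mult_left_mono norm_bounded) auto
  then show ?thesis
    unfolding scaleC_CK_def by (subst apply_Bcontfun) (auto intro: continuous_intros)
qed

lemma pmult_scaleC: "pmult p (scaleC_CK c v) = scaleC_CK c (pmult p v)"
  by (rule bcontfun_eqI) (simp add: pmult_apply scaleC_CK_apply)

definition Tmap_deriv :: "'a::topological_space CK \<Rightarrow> 'a CK \<Rightarrow> 'a CK" where
  "Tmap_deriv f0 g = Bcontfun (\<lambda>x. mob_deriv (apply_bcontfun f0 x) (apply_bcontfun g x))"

lemma Tmap_deriv_apply:
  fixes f0 g :: "'a::topological_space CK"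
  assumes "norm f0 < 1" "norm g \<le> 1"
  shows "apply_bcontfun (Tmap_deriv f0 g) x = mob_deriv (apply_bcontfun f0 x) (apply_bcontfun g x)"
proof -
  have w: "norm (apply_bcontfun f0 y) \<le> norm f0" and z: "norm (apply_bcontfun g y) \<le> 1" for y
    using norm_bounded[of f0 y] norm_bounded[of g y] assms by simp_all
  have "continuous_on UNIV (\<lambda>y. mob_deriv (apply_bcontfun f0 y) (apply_bcontfun g y))"
    unfolding mob_deriv_def using mob_denom_nonzero w z assms(1)
    by (intro continuous_intros) (auto intro: le_less_trans)
  then show ?thesis
    unfolding Tmap_deriv_def using mob_deriv_bound[OF w assms(1) z]
    by (subst apply_Bcontfun) auto
qed

lemma Tmap_remainder:
  fixes f0 g h :: "'a::topological_space CK"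
  assumes "norm f0 < 1" "norm g \<le> 1" "norm (g + h) \<le> 1"
  shows "norm (Tmap f0 (g + h) - Tmap f0 g - pmult (Tmap_deriv f0 g) h) \<le> (norm h)\<^sup>2 / (1 - norm f0)^3"
proof (rule norm_bound)
  fix x
  have pointwise: "(norm (apply_bcontfun h x))\<^sup>2 \<le> (norm h)\<^sup>2"
    by (intro power_mono norm_bounded) simp
  have "norm (apply_bcontfun (Tmap f0 (g + h) - Tmap f0 g - pmult (Tmap_deriv f0 g) h) x)
      \<le> (norm (apply_bcontfun h x))\<^sup>2 / (1 - norm f0)^3"
    unfolding minus_bcontfun.rep_eq plus_bcontfun.rep_eq pmult_apply
      Tmap_apply[OF assms(1,3), unfolded plus_bcontfun.rep_eq] Tmap_apply[OF assms(1,2)]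
      Tmap_deriv_apply[OF assms(1,2)]
    using assms norm_bounded[of f0 x] norm_bounded[of g x] norm_bounded[of "g + h" x]
    by (intro mob_remainder) auto
  also have "\<dots> \<le> (norm h)\<^sup>2 / (1 - norm f0)^3"
    using pointwise assms(1) by (simp add: divide_right_mono)
  finally show "norm (apply_bcontfun (Tmap f0 (g + h) - Tmap f0 g - pmult (Tmap_deriv f0 g) h) x)
      \<le> (norm h)\<^sup>2 / (1 - norm f0)^3" .
qed

lemma Tmap_has_derivative:
  fixes f0 g :: "'a::topological_space CK"
  assumes "norm f0 < 1" "norm g < 1"
  shows "(Tmap f0 has_derivative pmult (Tmap_deriv f0 g)) (at g)"
proof (rule has_derivative_quadratic_remainder[OF pmult_bounded_linear])
  show "\<forall>\<^sub>F y in at g. norm (Tmap f0 y - Tmap f0 g - pmult (Tmap_deriv f0 g) (y - g))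
      \<le> 1 / (1 - norm f0)^3 * (norm (y - g))\<^sup>2"
    unfolding eventually_at
  proof (intro exI conjI ballI impI)
    show "0 < 1 - norm g" using assms(2) by simp
    fix y assume "y \<in> UNIV" "y \<noteq> g \<and> dist y g < 1 - norm g"
    then have "norm (g + (y - g)) \<le> 1"
      using norm_triangle_ineq[of g "y - g"] by (simp add: dist_norm)
    from Tmap_remainder[OF assms(1) _ this] assms(2)
    show "norm (Tmap f0 y - Tmap f0 g - pmult (Tmap_deriv f0 g) (y - g))
      \<le> 1 / (1 - norm f0)^3 * (norm (y - g))\<^sup>2"
      by simp
  qed
qed

lemma holo_on_add:
  assumes "holo_on S \<psi>" "holo_on S \<phi>"
  shows "holo_on S (\<lambda>x. \<psi> x + \<phi> x)"
  unfolding holo_on_def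
proof
  fix g assume "g \<in> S"
  then obtain L1 L2 where
    "(\<psi> has_derivative L1) (at g)" "\<forall>c v. L1 (scaleC_CK c v) = c * L1 v"
    "(\<phi> has_derivative L2) (at g)" "\<forall>c v. L2 (scaleC_CK c v) = c * L2 v"
    using assms unfolding holo_on_def by meson
  moreover note has_derivative_add[OF this(1,3)]
  ultimately show "\<exists>L. ((\<lambda>x. \<psi> x + \<phi> x) has_derivative L) (at g) \<and> (\<forall>c v. L (scaleC_CK c v) = c * L v)"
    by (intro exI[of _ "\<lambda>v. L1 v + L2 v"] conjI) (simp_all add: algebra_simps)
qed

lemma holo_on_mult:
  assumes "holo_on S \<psi>" "holo_on S \<phi>"
  shows "holo_on S (\<lambda>x. \<psi> x * \<phi> x)"
  unfolding holo_on_def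
proof
  fix g assume "g \<in> S"
  then obtain L1 L2 where
    "(\<psi> has_derivative L1) (at g)" "\<forall>c v. L1 (scaleC_CK c v) = c * L1 v"
    "(\<phi> has_derivative L2) (at g)" "\<forall>c v. L2 (scaleC_CK c v) = c * L2 v"
    using assms unfolding holo_on_def by meson
  moreover note has_derivative_mult[OF this(1,3)]
  ultimately show "\<exists>L. ((\<lambda>x. \<psi> x * \<phi> x) has_derivative L) (at g) \<and> (\<forall>c v. L (scaleC_CK c v) = c * L v)"
    by (intro exI[of _ "\<lambda>v. \<psi> g * L2 v + L1 v * \<phi> g"] conjI) (simp_all add: algebra_simps)
qed

lemma holo_on_const: "holo_on S (\<lambda>x. c)"
  unfolding holo_on_def by (auto intro!: exI[of _ "\<lambda>v. 0"])

(* The unit of the algebras: the indicator function of B. *)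
definition oneB :: "'a::topological_space CK \<Rightarrow> complex" where
  "oneB g = (if g \<in> unitB then 1 else 0)"

lemma holo_on_oneB: "holo_on unitB oneB"
  unfolding holo_on_def
proof (intro ballI exI conjI)
  fix g :: "'a CK" assume "g \<in> unitB"
  then show "(oneB has_derivative (\<lambda>v. 0)) (at g)"
    by (rule has_derivative_transform_within_open[OF has_derivative_const open_unitB])
       (simp add: oneB_def)
qed simp

(* Chain rule: composition with T preserves holomorphy on B, as the derivative of T is complex-linear. *)
lemma holo_on_compT:
  fixes f0 :: "'a::topological_space CK"
  assumes "norm f0 < 1" "holo_on unitB \<psi>"
  shows "holo_on unitB (compT f0 \<psi>)"
  unfolding holo_on_def
proof
  fix g :: "'a CK" assume g: "g \<in> unitB"
  then have ng: "norm g < 1" by (simp add: unitB_iff)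
  have "Tmap f0 g \<in> unitB" using Tmap_norm_less[OF assms(1) ng] by (simp add: unitB_iff)
  then obtain L where L: "(\<psi> has_derivative L) (at (Tmap f0 g))" "\<forall>c v. L (scaleC_CK c v) = c * L v"
    using assms(2) unfolding holo_on_def by blast
  let ?L = "\<lambda>v. L (pmult (Tmap_deriv f0 g) v)"
  have "((\<lambda>y. \<psi> (Tmap f0 y)) has_derivative ?L) (at g)"
    by (rule has_derivative_compose[OF Tmap_has_derivative[OF assms(1) ng] L(1)])
  then have "(compT f0 \<psi> has_derivative ?L) (at g)"
    by (rule has_derivative_transform_within_open[OF _ open_unitB g]) (simp add: compT_def)
  moreover have "\<forall>c v. ?L (scaleC_CK c v) = c * ?L v"
    using L(2) by (simp add: pmult_scaleC)
  ultimately show "\<exists>L. (compT f0 \<psi> has_derivative L) (at g) \<and> (\<forall>c v. L (scaleC_CK c v) = c * L v)"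
    by blast
qed

lemma uniformly_continuous_on_subset:
  "uniformly_continuous_on S f \<Longrightarrow> T \<subseteq> S \<Longrightarrow> uniformly_continuous_on T f"
  for f :: "'a::metric_space \<Rightarrow> 'b::metric_space"
  unfolding uniformly_continuous_on_def by (meson subsetD)

lemma uniformly_continuous_on_cong:
  "uniformly_continuous_on S f \<Longrightarrow> (\<And>x. x \<in> S \<Longrightarrow> f x = g x) \<Longrightarrow> uniformly_continuous_on S g"
  for f :: "'a::metric_space \<Rightarrow> 'b::metric_space"
  unfolding uniformly_continuous_on_def by simp

lemma uniformly_continuous_on_mult_bounded:
  fixes f g :: "'a::metric_space \<Rightarrow> 'b::real_normed_algebra"
  assumes "uniformly_continuous_on S f" "uniformly_continuous_on S g"
    and "\<forall>x\<in>S. norm (f x) \<le> M" "\<forall>x\<in>S. norm (g x) \<le> M"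
  shows "uniformly_continuous_on S (\<lambda>x. f x * g x)"
  unfolding uniformly_continuous_on_def
proof (intro allI impI)
  fix e :: real assume "0 < e"
  define A where "A = \<bar>M\<bar> + 1"
  have "0 < A" by (simp add: A_def)
  then have "0 < e / (2 * A)" using \<open>0 < e\<close> by simp
  then obtain d1 d2 where
    d1: "d1 > 0" "\<forall>x\<in>S. \<forall>x'\<in>S. dist x' x < d1 \<longrightarrow> norm (f x' - f x) < e / (2 * A)" and
    d2: "d2 > 0" "\<forall>x\<in>S. \<forall>x'\<in>S. dist x' x < d2 \<longrightarrow> norm (g x' - g x) < e / (2 * A)"
    using assms(1,2) unfolding uniformly_continuous_on_def dist_norm by metis
  show "\<exists>d>0. \<forall>x\<in>S. \<forall>x'\<in>S. dist x' x < d \<longrightarrow> dist (f x' * g x') (f x * g x) < e"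
  proof (intro exI[of _ "min d1 d2"] conjI ballI impI)
    fix x x' assume x: "x \<in> S" "x' \<in> S" "dist x' x < min d1 d2"
    have bounds: "norm (f x') \<le> A" "norm (g x) \<le> A"
      using assms(3,4) x unfolding A_def by force+
    have "f x' * g x' - f x * g x = f x' * (g x' - g x) + (f x' - f x) * g x"
      by (simp add: algebra_simps)
    then have "norm (f x' * g x' - f x * g x) \<le> norm (f x') * norm (g x' - g x) + norm (f x' - f x) * norm (g x)"
      by (metis norm_triangle_le norm_mult_ineq add_mono)
    also have "\<dots> \<le> A * norm (g x' - g x) + norm (f x' - f x) * A"
      using bounds by (intro add_mono mult_right_mono mult_left_mono) auto
    also have "\<dots> < A * (e / (2 * A)) + (e / (2 * A)) * A"
      using \<open>0 < A\<close> x d1(2) d2(2)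
      by (intro add_strict_mono mult_strict_left_mono mult_strict_right_mono) auto
    also have "\<dots> = e" using \<open>0 < A\<close> by (simp add: field_simps)
    finally show "dist (f x' * g x') (f x * g x) < e" by (simp add: dist_norm)
  qed (use d1(1) d2(1) in simp)
qed

lemma Tmap_uniformly_continuous:
  fixes f0 :: "'a::topological_space CK"
  assumes "norm f0 < 1"
  shows "uniformly_continuous_on unitB (Tmap f0)"
proof (rule lipschitz_on_uniformly_continuous)
  show "(1 / (1 - norm f0)\<^sup>2)-lipschitz_on unitB (Tmap f0)"
    using Tmap_lipschitz[OF assms] by (intro lipschitz_onI) (auto simp: unitB_iff dist_norm)
qed

lemma uniformly_continuous_on_compT:
  fixes f0 :: "'a::topological_space CK"
  assumes "norm f0 < 1" "uniformly_continuous_on unitB \<psi>"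
  shows "uniformly_continuous_on unitB (compT f0 \<psi>)"
proof -
  have "Tmap f0 ` unitB \<subseteq> unitB" using Tmap_norm_less[OF assms(1)] by (auto simp: unitB_iff)
  then have "uniformly_continuous_on unitB (\<lambda>g. \<psi> (Tmap f0 g))"
    using Tmap_uniformly_continuous[OF assms(1)] assms(2)
    by (blast intro: uniformly_continuous_on_compose uniformly_continuous_on_subset)
  then show ?thesis by (rule uniformly_continuous_on_cong) (simp add: compT_def)
qed

lemma Hinf_add:
  assumes "\<psi> \<in> Hinf S" "\<phi> \<in> Hinf S"
  shows "(\<lambda>x. \<psi> x + \<phi> x) \<in> Hinf S"
proof -
  obtain M1 M2 where "\<forall>g\<in>S. norm (\<psi> g) \<le> M1" "\<forall>g\<in>S. norm (\<phi> g) \<le> M2"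
    using assms unfolding Hinf_def by blast
  then have "\<forall>g\<in>S. norm (\<psi> g + \<phi> g) \<le> M1 + M2"
    by (meson add_mono norm_triangle_le)
  then show ?thesis using assms holo_on_add unfolding Hinf_def by auto
qed

lemma Hinf_mult:
  assumes "\<psi> \<in> Hinf S" "\<phi> \<in> Hinf S"
  shows "(\<lambda>x. \<psi> x * \<phi> x) \<in> Hinf S"
proof -
  obtain M1 M2 where "\<forall>g\<in>S. norm (\<psi> g) \<le> M1" "\<forall>g\<in>S. norm (\<phi> g) \<le> M2"
    using assms unfolding Hinf_def by blast
  then have "\<forall>g\<in>S. norm (\<psi> g * \<phi> g) \<le> M1 * M2"
    unfolding norm_mult by (meson mult_mono norm_ge_zero order_trans)
  then show ?thesis using assms holo_on_mult unfolding Hinf_def by auto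
qed

lemma Hinf_cmul:
  assumes "\<psi> \<in> Hinf S"
  shows "(\<lambda>x. c * \<psi> x) \<in> Hinf S"
proof -
  obtain M where "\<forall>g\<in>S. norm (\<psi> g) \<le> M"
    using assms unfolding Hinf_def by blast
  then have "\<forall>g\<in>S. norm (c * \<psi> g) \<le> norm c * M"
    unfolding norm_mult by (simp add: mult_left_mono)
  then show ?thesis using assms holo_on_mult[OF holo_on_const] unfolding Hinf_def by auto
qed

lemma Hinf_vanish: "\<psi> \<in> Hinf S \<Longrightarrow> g \<notin> S \<Longrightarrow> \<psi> g = 0"
  unfolding Hinf_def by blast

lemma oneB_Hinf: "oneB \<in> Hinf unitB"
  using holo_on_oneB unfolding Hinf_def by (auto simp: oneB_def)

lemma compT_Hinf:
  fixes f0 :: "'a::topological_space CK"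
  assumes "f0 \<in> unitB" "\<psi> \<in> Hinf unitB"
  shows "compT f0 \<psi> \<in> Hinf unitB"
proof -
  have f0: "norm f0 < 1" using assms(1) by (simp add: unitB_iff)
  obtain M where "\<forall>g\<in>unitB. norm (\<psi> g) \<le> M" using assms(2) unfolding Hinf_def by blast
  then have "\<forall>g\<in>unitB. norm (compT f0 \<psi> g) \<le> M"
    using Tmap_norm_less[OF f0] by (auto simp: compT_def unitB_iff)
  then show ?thesis
    using holo_on_compT[OF f0] assms(2) unfolding Hinf_def by (auto simp: compT_def)
qed

lemma Au_subset_Hinf: "Au S \<subseteq> Hinf S"
  unfolding Au_def by blast

lemma Au_add: "\<psi> \<in> Au S \<Longrightarrow> \<phi> \<in> Au S \<Longrightarrow> (\<lambda>x. \<psi> x + \<phi> x) \<in> Au S"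
  unfolding Au_def by (auto intro: Hinf_add uniformly_continuous_on_add)

lemma Au_cmul: "\<psi> \<in> Au S \<Longrightarrow> (\<lambda>x. c * \<psi> x) \<in> Au S"
  unfolding Au_def by (auto intro: Hinf_cmul uniformly_continuous_on_cmul_left)

lemma Au_mult:
  assumes "\<psi> \<in> Au S" "\<phi> \<in> Au S"
  shows "(\<lambda>x. \<psi> x * \<phi> x) \<in> Au S"
proof -
  obtain M1 M2 where "\<forall>g\<in>S. norm (\<psi> g) \<le> M1" "\<forall>g\<in>S. norm (\<phi> g) \<le> M2"
    using assms unfolding Au_def Hinf_def by blast
  then have "\<forall>g\<in>S. norm (\<psi> g) \<le> max M1 M2" "\<forall>g\<in>S. norm (\<phi> g) \<le> max M1 M2"
    by (meson max.cobounded1 max.cobounded2 order_trans)+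
  then show ?thesis
    using assms uniformly_continuous_on_mult_bounded[of S \<psi> \<phi>]
    unfolding Au_def by (auto intro: Hinf_mult)
qed

lemma oneB_Au: "oneB \<in> Au unitB"
proof -
  have "uniformly_continuous_on unitB oneB"
    by (rule uniformly_continuous_on_cong[OF uniformly_continuous_on_const[of _ 1]])
       (simp add: oneB_def)
  then show ?thesis using oneB_Hinf unfolding Au_def by simp
qed

lemma compT_Au:
  fixes f0 :: "'a::topological_space CK"
  assumes "f0 \<in> unitB" "\<psi> \<in> Au unitB"
  shows "compT f0 \<psi> \<in> Au unitB"
  using assms compT_Hinf uniformly_continuous_on_compT unfolding Au_def unitB_iff by blast

definition admissible :: "('a::topological_space CK \<Rightarrow> complex) set \<Rightarrow> bool" where
  "admissible H \<longleftrightarrow>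
     (\<forall>\<psi>\<in>H. \<forall>\<phi>\<in>H. (\<lambda>x. \<psi> x + \<phi> x) \<in> H) \<and>
     (\<forall>\<psi>\<in>H. \<forall>c. (\<lambda>x. c * \<psi> x) \<in> H) \<and>
     (\<forall>\<psi>\<in>H. \<forall>\<phi>\<in>H. (\<lambda>x. \<psi> x * \<phi> x) \<in> H) \<and>
     oneB \<in> H \<and>
     (\<forall>\<psi>\<in>H. \<forall>g. g \<notin> unitB \<longrightarrow> \<psi> g = 0) \<and>
     (\<forall>f0\<in>unitB. \<forall>\<psi>\<in>H. compT f0 \<psi> \<in> H) \<and>
     Au unitB \<subseteq> H"

lemma
  assumes "admissible H"
  shows admissible_add: "\<psi> \<in> H \<Longrightarrow> \<phi> \<in> H \<Longrightarrow> (\<lambda>x. \<psi> x + \<phi> x) \<in> H"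
    and admissible_cmul: "\<psi> \<in> H \<Longrightarrow> (\<lambda>x. c * \<psi> x) \<in> H"
    and admissible_mult: "\<psi> \<in> H \<Longrightarrow> \<phi> \<in> H \<Longrightarrow> (\<lambda>x. \<psi> x * \<phi> x) \<in> H"
    and admissible_oneB: "oneB \<in> H"
    and admissible_vanish: "\<psi> \<in> H \<Longrightarrow> g \<notin> unitB \<Longrightarrow> \<psi> g = 0"
    and admissible_compT: "f0 \<in> unitB \<Longrightarrow> \<psi> \<in> H \<Longrightarrow> compT f0 \<psi> \<in> H"
    and admissible_contains_Au: "Au unitB \<subseteq> H"
  using assms unfolding admissible_def by blast+

lemma Hinf_admissible: "admissible (Hinf unitB)"
  unfolding admissible_def
  using Au_subset_Hinf
  by (auto intro: Hinf_add Hinf_cmul Hinf_mult oneB_Hinf compT_Hinf Hinf_vanish)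

lemma Au_admissible: "admissible (Au unitB)"
  unfolding admissible_def
  using Au_subset_Hinf
  by (auto intro: Au_add Au_cmul Au_mult oneB_Au compT_Au Hinf_vanish dest: subsetD)

lemma
  assumes "\<tau> \<in> spectrum_alg H"
  shows spectrum_add: "\<psi> \<in> H \<Longrightarrow> \<phi> \<in> H \<Longrightarrow> \<tau> (\<lambda>x. \<psi> x + \<phi> x) = \<tau> \<psi> + \<tau> \<phi>"
    and spectrum_cmul: "\<psi> \<in> H \<Longrightarrow> \<tau> (\<lambda>x. c * \<psi> x) = c * \<tau> \<psi>"
    and spectrum_mult: "\<psi> \<in> H \<Longrightarrow> \<phi> \<in> H \<Longrightarrow> \<tau> (\<lambda>x. \<psi> x * \<phi> x) = \<tau> \<psi> * \<tau> \<phi>"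
    and spectrum_nonzero: "\<exists>\<psi>\<in>H. \<tau> \<psi> \<noteq> 0"
    and spectrum_outside: "\<psi> \<notin> H \<Longrightarrow> \<tau> \<psi> = 0"
  using assms unfolding spectrum_alg_def by blast+

lemma spectrum_oneB:
  assumes "admissible H" "\<tau> \<in> spectrum_alg H"
  shows "\<tau> oneB = 1"
proof -
  obtain \<psi> where \<psi>: "\<psi> \<in> H" "\<tau> \<psi> \<noteq> 0" using spectrum_nonzero[OF assms(2)] by blast
  have "(\<lambda>x. oneB x * \<psi> x) = \<psi>"
    using admissible_vanish[OF assms(1) \<psi>(1)] by (auto simp: oneB_def)
  then have "\<tau> oneB * \<tau> \<psi> = \<tau> \<psi>"
    using spectrum_mult[OF assms(2) admissible_oneB[OF assms(1)] \<psi>(1)] by simp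
  then show ?thesis using \<psi>(2) by simp
qed

lemma compT_add: "compT f0 (\<lambda>x. \<psi> x + \<phi> x) = (\<lambda>x. compT f0 \<psi> x + compT f0 \<phi> x)"
  and compT_cmul: "compT f0 (\<lambda>x. c * \<psi> x) = (\<lambda>x. c * compT f0 \<psi> x)"
  and compT_mult: "compT f0 (\<lambda>x. \<psi> x * \<phi> x) = (\<lambda>x. compT f0 \<psi> x * compT f0 \<phi> x)"
  by (simp_all add: compT_def fun_eq_iff)

lemma compT_oneB: "f0 \<in> unitB \<Longrightarrow> compT f0 oneB = oneB"
  by (simp add: compT_def oneB_def fun_eq_iff Tmap_unitB)

lemma compT_inverse:
  assumes "f0 \<in> unitB" "\<And>g. g \<notin> unitB \<Longrightarrow> \<psi> g = 0"
  shows "compT (- f0) (compT f0 \<psi>) = \<psi>"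
proof
  fix g :: "'a::topological_space CK"
  show "compT (- f0) (compT f0 \<psi>) g = \<psi> g"
  proof (cases "g \<in> unitB")
    case True
    have "- f0 \<in> unitB" using assms(1) by (simp add: unitB_iff)
    then have "Tmap (- f0) g \<in> unitB" using True by (rule Tmap_unitB)
    moreover have "Tmap f0 (Tmap (- f0) g) = g"
      using True assms(1) by (simp add: unitB_iff Tmap_inverse)
    ultimately show ?thesis using True by (simp add: compT_def)
  qed (simp add: compT_def assms(2))
qed

lemma hatT_spectrum:
  assumes "admissible H" "f0 \<in> unitB" "\<tau> \<in> spectrum_alg H"
  shows "hatT H f0 \<tau> \<in> spectrum_alg H"
proof -
  note closed = admissible_add[OF assms(1)] admissible_cmul[OF assms(1)]
    admissible_mult[OF assms(1)] admissible_compT[OF assms(1,2)]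
  have "hatT H f0 \<tau> oneB = 1"
    using spectrum_oneB[OF assms(1,3)] admissible_oneB[OF assms(1)] compT_oneB[OF assms(2)]
    by (simp add: hatT_def)
  then have "\<exists>\<psi>\<in>H. hatT H f0 \<tau> \<psi> \<noteq> 0"
    using admissible_oneB[OF assms(1)] by force
  then show ?thesis
    unfolding spectrum_alg_def
    by (auto simp: hatT_def compT_add compT_cmul compT_mult closed
        spectrum_add[OF assms(3)] spectrum_cmul[OF assms(3)] spectrum_mult[OF assms(3)])
qed

lemma hatT_fiber:
  assumes "admissible H" "f0 \<in> unitB" "g0 \<in> unitB" "\<tau> \<in> fiber H g0"
  shows "hatT H f0 \<tau> \<in> fiber H (Tmap f0 g0)"
proof -
  have "hatT H f0 \<tau> g = g (Tmap f0 g0)" if "g \<in> Au unitB" for g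
  proof -
    have "compT f0 g \<in> Au unitB" using compT_Au[OF assms(2) that] .
    then show ?thesis
      using assms that admissible_contains_Au[OF assms(1)]
      by (auto simp: hatT_def fiber_def compT_def)
  qed
  then show ?thesis
    using hatT_spectrum[OF assms(1,2)] assms(4) unfolding fiber_def by blast
qed

lemma hatT_inverse:
  assumes "admissible H" "f0 \<in> unitB" "\<sigma> \<in> spectrum_alg H"
  shows "hatT H f0 (hatT H (- f0) \<sigma>) = \<sigma>"
proof
  fix \<psi>
  show "hatT H f0 (hatT H (- f0) \<sigma>) \<psi> = \<sigma> \<psi>"
  proof (cases "\<psi> \<in> H")
    case True
    then have "compT (- f0) (compT f0 \<psi>) = \<psi>"
      using compT_inverse[OF assms(2)] admissible_vanish[OF assms(1)] by blast
    then show ?thesis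
      using True admissible_compT[OF assms(1,2) True] by (simp add: hatT_def)
  qed (simp add: hatT_def spectrum_outside[OF assms(3)])
qed

theorem lemma3p3:
  fixes f0 :: "'a::t2_space CK"
    and H :: "('a CK \<Rightarrow> complex) set"
  assumes "compact (UNIV :: 'a set)"
    and "f0 \<in> unitB"
    and "H = Au unitB \<or> H = Hinf unitB"
  shows "(\<forall>\<psi>\<in>H. compT f0 \<psi> \<in> H)
     \<and> (\<forall>\<tau>\<in>spectrum_alg H. hatT H f0 \<tau> \<in> spectrum_alg H)
     \<and> hatT H f0 ` fiber H f0 = fiber H 0"
proof -
  have H: "admissible H" using assms(3) Au_admissible Hinf_admissible by blast
  have f0: "norm f0 < 1" and minus_f0: "- f0 \<in> unitB" and zero: "0 \<in> unitB"
    using assms(2) by (simp_all add: unitB_iff)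
  have "hatT H f0 ` fiber H f0 \<subseteq> fiber H 0"
    using hatT_fiber[OF H assms(2) assms(2)] Tmap_self[OF f0] by auto
  moreover have "fiber H 0 \<subseteq> hatT H f0 ` fiber H f0"
  proof
    fix \<sigma> assume \<sigma>: "\<sigma> \<in> fiber H 0"
    have "hatT H (- f0) \<sigma> \<in> fiber H f0"
      using hatT_fiber[OF H minus_f0 zero \<sigma>] Tmap_zero[OF f0] by simp
    moreover have "\<sigma> = hatT H f0 (hatT H (- f0) \<sigma>)"
      using hatT_inverse[OF H assms(2)] \<sigma> by (simp add: fiber_def)
    ultimately show "\<sigma> \<in> hatT H f0 ` fiber H f0" by blast
  qed
  ultimately show ?thesis
    using admissible_compT[OF H assms(2)] hatT_spectrum[OF H assms(2)] by blast
qed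

end
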